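(* Let $f\colon M^n\to\mathbb{C}^{n+p}$ be a holomorphic isometric immersion of a Kähler manifold of real dimension $2n$, and let $J$ be the complex structure of $\mathbb{C}^{n+p}$. Let $f^N$ and $f^T$ be the normal and tangent components of the position vector $f$, and on the open set where $f^N\neq0$ let $F=f^N/\|f^N\|^2$. Let $\alpha_f^\perp$ denote the component of the second fundamental form $\alpha_f$ orthogonal to $\mathrm{span}\{f^N,Jf^N\}$. Then $F$ is anti-holomorphic, i.e. $F_*\circ J_M=-J\circ F_*$ ($J_M$ the complex structure of $M$), if and only if $\alpha_f^\perp(X,f^T)=0$ for all tangent vectors $X$. In particular, this always holds when $p=1$. *)

theory Defs
  imports "HOL-Analysis.Analysis"
begin

text \<open>Local (chart) model: M is an open set U of complex^'n (holomorphic coordinates),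
  f : U \<rightarrow> complex^'m holomorphic immersion, M carries the induced (Kaehler) metric.
  The real inner product on complex^'m is the Euclidean one of R^(2m).\<close>

definition cx_holomorphic :: "(complex^'n \<Rightarrow> complex^'m) \<Rightarrow> (complex^'n) set \<Rightarrow> bool" where
  "cx_holomorphic f U \<longleftrightarrow> (\<forall>x\<in>U. \<exists>L. (f has_derivative L) (at x) \<and>
        (\<forall>c v. L (c *s v) = c *s L v))"

definition cx_antiholomorphic :: "(complex^'n \<Rightarrow> complex^'m) \<Rightarrow> (complex^'n) set \<Rightarrow> bool" where
  "cx_antiholomorphic F W \<longleftrightarrow> (\<forall>x\<in>W. \<exists>L. (F has_derivative L) (at x) \<and>
        (\<forall>v. L (\<i> *s v) = - (\<i> *s L v)))"

definition cx_immersion :: "(complex^'n \<Rightarrow> complex^'m) \<Rightarrow> (complex^'n) set \<Rightarrow> bool" where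
  "cx_immersion f U \<longleftrightarrow> (\<forall>x\<in>U. f differentiable (at x) \<and> inj (frechet_derivative f (at x)))"

definition orth_proj :: "'a::real_inner set \<Rightarrow> 'a \<Rightarrow> 'a" where
  "orth_proj V w = (THE v. v \<in> V \<and> (\<forall>u\<in>V. inner (w - v) u = 0))"

definition tangent_space :: "(complex^'n \<Rightarrow> complex^'m) \<Rightarrow> complex^'n \<Rightarrow> (complex^'m) set" where
  "tangent_space f x = range (frechet_derivative f (at x))"

definition tan_part :: "(complex^'n \<Rightarrow> complex^'m) \<Rightarrow> complex^'n \<Rightarrow> complex^'m \<Rightarrow> complex^'m" where
  "tan_part f x w = orth_proj (tangent_space f x) w"

definition nor_part :: "(complex^'n \<Rightarrow> complex^'m) \<Rightarrow> complex^'n \<Rightarrow> complex^'m \<Rightarrow> complex^'m" where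
  "nor_part f x w = w - tan_part f x w"

definition fT :: "(complex^'n \<Rightarrow> complex^'m) \<Rightarrow> complex^'n \<Rightarrow> complex^'m" where
  "fT f x = tan_part f x (f x)"

definition fN :: "(complex^'n \<Rightarrow> complex^'m) \<Rightarrow> complex^'n \<Rightarrow> complex^'m" where
  "fN f x = nor_part f x (f x)"

definition FN :: "(complex^'n \<Rightarrow> complex^'m) \<Rightarrow> complex^'n \<Rightarrow> complex^'m" where
  "FN f x = (1 / (norm (fN f x))\<^sup>2) *\<^sub>R fN f x"

text \<open>Second fundamental form at x, in chart coordinates: alpha(df X, df Y) is the normal
  part of the second derivative D^2 f(x)(X,Y).\<close>
definition sff :: "(complex^'n \<Rightarrow> complex^'m) \<Rightarrow> complex^'n \<Rightarrow> complex^'n \<Rightarrow> complex^'n \<Rightarrow> complex^'m" where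
  "sff f x X Y = nor_part f x
      (frechet_derivative (\<lambda>y. frechet_derivative f (at y) Y) (at x) X)"

definition sff_perp :: "(complex^'n \<Rightarrow> complex^'m) \<Rightarrow> complex^'n \<Rightarrow> complex^'n \<Rightarrow> complex^'n \<Rightarrow> complex^'m" where
  "sff_perp f x X Y = sff f x X Y - orth_proj (span {fN f x, \<i> *s fN f x}) (sff f x X Y)"

end

theory Submission
  imports Defs
begin

text \<open>
  Write \<open>f\<^sup>T = f\<^sub>* \<xi>\<close>. Differentiating \<open>f\<^sup>N = f - f\<^sub>* \<xi>\<close> shows that the tangent part of
  \<open>(f\<^sup>N)\<^sub>* X\<close> is determined by \<open>\<langle>f\<^sup>N, D\<^sup>2 f(\<cdot>, X)\<rangle>\<close> and its normal part is \<open>-\<alpha>(X, \<xi>)\<close>.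
  Since \<open>D\<^sup>2 f\<close> and \<open>\<alpha>\<close> are complex bilinear, this yields the key identity
  \<open>(f\<^sup>N)\<^sub>*(J X) + J (f\<^sup>N)\<^sub>* X = -2 J \<alpha>(X, \<xi>)\<close>. Composing with the derivative of the inversion
  \<open>v \<mapsto> v / |v|\<^sup>2\<close> turns it into \<open>F\<^sub>*(J X) + J F\<^sub>* X = -(2 / |f\<^sup>N|\<^sup>2) J \<alpha>\<^sup>\<perp>(X, \<xi>)\<close>,
  which is the theorem; for \<open>p = 1\<close> the normal space is \<open>span {f\<^sup>N, J f\<^sup>N}\<close>, so \<open>\<alpha>\<^sup>\<perp> = 0\<close>.
\<close>

section \<open>The complex structure of \<open>\<complex>\<^sup>m\<close>\<close>

lemma iscale_add: "\<i> *s ((v::complex^'m) + w) = \<i> *s v + \<i> *s w"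
  and iscale_diff: "\<i> *s ((v::complex^'m) - w) = \<i> *s v - \<i> *s w"
  and iscale_scaleR: "\<i> *s (a *\<^sub>R (v::complex^'m)) = a *\<^sub>R (\<i> *s v)"
  and iscale_iscale: "\<i> *s (\<i> *s (v::complex^'m)) = - v"
  and iscale_eq_0_iff: "\<i> *s (v::complex^'m) = 0 \<longleftrightarrow> v = 0"
  by (simp_all add: vec_eq_iff algebra_simps scaleR_conv_of_real)

lemma inner_iscale_left: "inner (\<i> *s (v::complex^'m)) w = - inner v (\<i> *s w)"
  by (simp add: inner_vec_def inner_complex_def sum_negf[symmetric] algebra_simps)

lemma inner_iscale_iscale: "inner (\<i> *s (v::complex^'m)) (\<i> *s w) = inner v w"
  by (simp add: inner_vec_def inner_complex_def algebra_simps)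

lemma inner_iscale_self: "inner (\<i> *s (v::complex^'m)) v = 0"
  using inner_iscale_left[of v v] by (simp add: inner_commute)

lemma bounded_linear_iscale: "bounded_linear (\<lambda>v::complex^'m. \<i> *s v)"
proof (rule bounded_linear_intro[where K=1])
  show "norm (\<i> *s v) \<le> norm v * 1" for v :: "complex^'m"
    by (simp add: norm_eq_sqrt_inner inner_iscale_iscale)
qed (simp_all add: iscale_add iscale_scaleR)


section \<open>Linear algebra\<close>

lemma linear_basis_expansion:
  fixes L :: "'a::euclidean_space \<Rightarrow> 'b::real_vector"
  assumes "linear L"
  shows "(\<Sum>b\<in>Basis. (z \<bullet> b) *\<^sub>R L b) = L z"
  using linear_sum[OF assms, of "\<lambda>b. (z \<bullet> b) *\<^sub>R b" Basis]
  by (simp add: linear_scale[OF assms] euclidean_representation)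

lemma orth_residual_unique:
  fixes V :: "'a::real_inner set"
  assumes "subspace V" "v \<in> V" "\<forall>u\<in>V. inner (w - v) u = 0"
    and "v' \<in> V" "\<forall>u\<in>V. inner (w - v') u = 0"
  shows "v' = v"
proof -
  have "v - v' \<in> V" using assms subspace_diff by blast
  then have "inner (w - v') (v - v') - inner (w - v) (v - v') = 0" using assms by simp
  then have "inner (v - v') (v - v') = 0" by (simp add: inner_diff_left)
  then show ?thesis by simp
qed

lemma orth_proj_works:
  fixes V :: "'a::euclidean_space set"
  assumes "subspace V"
  shows "orth_proj V w \<in> V \<and> (\<forall>u\<in>V. inner (w - orth_proj V w) u = 0)"
proof -
  obtain y z where y: "y \<in> span V" and z: "\<And>u. u \<in> span V \<Longrightarrow> orthogonal z u"
    and w: "w = y + z"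
    using orthogonal_subspace_decomp_exists[of V w] by blast
  have "y \<in> V \<and> (\<forall>u\<in>V. inner (w - y) u = 0)"
    using y z w span_eq_iff[of V, THEN iffD2, OF assms] span_base
    by (auto simp: orthogonal_def)
  then have "\<exists>!v. v \<in> V \<and> (\<forall>u\<in>V. inner (w - v) u = 0)"
    using orth_residual_unique[OF assms] by blast
  then show ?thesis unfolding orth_proj_def by (rule theI')
qed

lemma orth_proj_unique:
  fixes V :: "'a::euclidean_space set"
  assumes "subspace V" "v \<in> V" "\<forall>u\<in>V. inner (w - v) u = 0"
  shows "orth_proj V w = v"
  using orth_residual_unique[OF assms] orth_proj_works[OF assms(1)] by blast

text \<open>Projection onto the complex line \<open>span {u, J u}\<close>: since \<open>u \<perp> J u\<close> and
  \<open>|J u| = |u|\<close>, it is given by the two Fourier coefficients.\<close>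

lemma orth_proj_complex_line:
  fixes u :: "complex^'m"
  assumes "u \<noteq> 0"
  shows "orth_proj (span {u, \<i> *s u}) w =
    (inner w u / inner u u) *\<^sub>R u + (inner w (\<i> *s u) / inner u u) *\<^sub>R (\<i> *s u)"
proof -
  define p where "p = (inner w u / inner u u) *\<^sub>R u + (inner w (\<i> *s u) / inner u u) *\<^sub>R (\<i> *s u)"
  have uu: "inner u u \<noteq> 0" using assms by simp
  have perp: "inner (\<i> *s u) u = 0" "inner u (\<i> *s u) = 0"
    using inner_iscale_self[of u] by (simp_all add: inner_commute)
  have residual: "inner (w - p) u = 0" "inner (w - p) (\<i> *s u) = 0"
    unfolding p_def using uu perp
    by (simp_all add: inner_diff_left inner_add_left inner_iscale_iscale)
  have "orthogonal (w - p) v" if "v \<in> span {u, \<i> *s u}" for v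
    by (rule orthogonal_to_span[OF that]) (use residual in \<open>auto simp: orthogonal_def\<close>)
  then have "\<forall>v\<in>span {u, \<i> *s u}. inner (w - p) v = 0"
    by (simp add: orthogonal_def)
  moreover have "p \<in> span {u, \<i> *s u}" unfolding p_def
    by (intro span_add span_scale span_base) auto
  ultimately show ?thesis
    unfolding p_def[symmetric] by (intro orth_proj_unique subspace_span)
qed


section \<open>Symmetry of the second derivative\<close>

lemma second_difference_bound:
  fixes g :: "'a::real_normed_vector \<Rightarrow> 'b::real_inner"
  assumes h: "h > 0"
    and der_shift: "\<And>t. t \<in> {0..h} \<Longrightarrow>
      (g has_derivative Dg (x + t *\<^sub>R A + h *\<^sub>R B)) (at (x + t *\<^sub>R A + h *\<^sub>R B))"
    and der: "\<And>t. t \<in> {0..h} \<Longrightarrow> (g has_derivative Dg (x + t *\<^sub>R A)) (at (x + t *\<^sub>R A))"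
    and close: "\<And>t. t \<in> {0..h} \<Longrightarrow>
      norm (Dg (x + t *\<^sub>R A + h *\<^sub>R B) A - Dg (x + t *\<^sub>R A) A - h *\<^sub>R K) \<le> \<eta>"
  shows "norm (g (x + h *\<^sub>R A + h *\<^sub>R B) - g (x + h *\<^sub>R A) - g (x + h *\<^sub>R B) + g x
      - (h * h) *\<^sub>R K) \<le> h * \<eta>"
proof -
  define \<psi> where "\<psi> t = g (x + t *\<^sub>R A + h *\<^sub>R B) - g (x + t *\<^sub>R A) - (t * h) *\<^sub>R K" for t
  define \<psi>' where "\<psi>' t s = Dg (x + t *\<^sub>R A + h *\<^sub>R B) (s *\<^sub>R A) - Dg (x + t *\<^sub>R A) (s *\<^sub>R A)
      - (s * h) *\<^sub>R K" for t s
  have line: "((\<lambda>t. g (x + t *\<^sub>R A + c)) has_derivative (\<lambda>s. D (s *\<^sub>R A))) (at t)"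
    if "(g has_derivative D) (at (x + t *\<^sub>R A + c))" for t c D
  proof -
    have "((\<lambda>t. x + t *\<^sub>R A + c) has_derivative (\<lambda>s. s *\<^sub>R A)) (at t)"
      by (auto intro!: derivative_eq_intros)
    from diff_chain_at[OF this that] show ?thesis by (simp add: o_def)
  qed
  have \<psi>_der: "(\<psi> has_derivative \<psi>' t) (at t)" if "t \<in> {0..h}" for t
  proof -
    have "((\<lambda>t. g (x + t *\<^sub>R A)) has_derivative (\<lambda>s. Dg (x + t *\<^sub>R A) (s *\<^sub>R A))) (at t)"
      using line[of "Dg (x + t *\<^sub>R A)" t 0] der[OF that] by simp
    moreover have "((\<lambda>t. (t * h) *\<^sub>R K) has_derivative (\<lambda>s. (s * h) *\<^sub>R K)) (at t)"
      by (auto intro!: derivative_eq_intros)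
    ultimately show ?thesis
      unfolding \<psi>_def \<psi>'_def
      by (intro has_derivative_diff line der_shift that)
  qed
  have "continuous_on {0..h} \<psi>"
    using \<psi>_der by (meson continuous_at_imp_continuous_on has_derivative_continuous)
  then obtain t where t: "t \<in> {0<..<h}" "norm (\<psi> h - \<psi> 0) \<le> norm (\<psi>' t (h - 0))"
    using mvt_general[of 0 h \<psi> \<psi>'] h \<psi>_der by force
  have "linear (Dg (x + t *\<^sub>R A + h *\<^sub>R B))" "linear (Dg (x + t *\<^sub>R A))"
    using der_shift[of t] der[of t] t(1) has_derivative_linear by auto
  then have "\<psi>' t h = h *\<^sub>R (Dg (x + t *\<^sub>R A + h *\<^sub>R B) A - Dg (x + t *\<^sub>R A) A - h *\<^sub>R K)"
    by (simp add: \<psi>'_def linear_scale scaleR_diff_right)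
  then have "norm (\<psi>' t h) \<le> h * \<eta>"
    using close[of t] t(1) h by (simp add: mult_left_mono)
  moreover have "\<psi> h - \<psi> 0 = g (x + h *\<^sub>R A + h *\<^sub>R B) - g (x + h *\<^sub>R A) - g (x + h *\<^sub>R B) + g x
      - (h * h) *\<^sub>R K"
    by (simp add: \<psi>_def)
  ultimately show ?thesis using t(2) by simp
qed

lemma derivative_increment_bound:
  fixes Dg :: "'a::real_normed_vector \<Rightarrow> 'a \<Rightarrow> 'b::real_normed_vector"
  assumes near: "\<And>v. norm v < \<rho> \<Longrightarrow> norm (Dg (x + v) A - Dg x A - H v) \<le> \<epsilon> * norm v"
    and linH: "linear H" and eps: "\<epsilon> \<ge> 0"
    and small: "norm (t *\<^sub>R A + h *\<^sub>R B) \<le> r" "norm (t *\<^sub>R A) \<le> r" and r: "r < \<rho>"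
  shows "norm (Dg (x + t *\<^sub>R A + h *\<^sub>R B) A - Dg (x + t *\<^sub>R A) A - h *\<^sub>R H B) \<le> 2 * \<epsilon> * r"
proof -
  define v w where "v = t *\<^sub>R A + h *\<^sub>R B" and "w = t *\<^sub>R A"
  have "H v - H w = h *\<^sub>R H B"
    by (simp add: v_def w_def linear_add[OF linH] linear_scale[OF linH])
  then have "Dg (x + t *\<^sub>R A + h *\<^sub>R B) A - Dg (x + t *\<^sub>R A) A - h *\<^sub>R H B
      = (Dg (x + v) A - Dg x A - H v) - (Dg (x + w) A - Dg x A - H w)"
    by (simp add: v_def w_def add.assoc algebra_simps)
  then have "norm (Dg (x + t *\<^sub>R A + h *\<^sub>R B) A - Dg (x + t *\<^sub>R A) A - h *\<^sub>R H B)
      \<le> norm (Dg (x + v) A - Dg x A - H v) + norm (Dg (x + w) A - Dg x A - H w)"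
    by (simp only: norm_triangle_ineq4)
  also have "\<dots> \<le> \<epsilon> * norm v + \<epsilon> * norm w"
  proof -
    have "norm v < \<rho>" "norm w < \<rho>" using small r unfolding v_def w_def by linarith+
    from near[OF this(1)] near[OF this(2)] show ?thesis by (rule add_mono)
  qed
  also have "\<dots> \<le> \<epsilon> * r + \<epsilon> * r"
    using small eps unfolding v_def w_def by (intro add_mono mult_left_mono) auto
  finally show ?thesis by simp
qed

lemma second_difference_asymptotics:
  fixes g :: "'a::real_normed_vector \<Rightarrow> 'b::real_inner"
  assumes U: "open U" "x \<in> U"
    and Dg: "\<And>y. y \<in> U \<Longrightarrow> (g has_derivative Dg y) (at y)"
    and H: "((\<lambda>y. Dg y A) has_derivative H) (at x)"
    and e: "e > 0"
  shows "\<exists>d>0. \<forall>h. 0 < h \<and> h < d \<longrightarrow>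
    norm (g (x + h *\<^sub>R A + h *\<^sub>R B) - g (x + h *\<^sub>R A) - g (x + h *\<^sub>R B) + g x
      - (h * h) *\<^sub>R H B) \<le> e * (h * h)"
proof -
  define C where "C = norm A + norm B + 1"
  have C: "C > 0" by (simp add: C_def add_nonneg_pos)
  obtain d0 where d0: "d0 > 0" "ball x d0 \<subseteq> U" using U open_contains_ball by blast
  obtain d1 where d1: "d1 > 0" "\<And>y. norm (y - x) < d1 \<Longrightarrow>
      norm (Dg y A - Dg x A - H (y - x)) \<le> e / (2 * C) * norm (y - x)"
    using H[unfolded has_derivative_at_alt] e C by (metis divide_pos_pos mult_pos_pos zero_less_numeral)
  have near: "x + v \<in> U \<and> norm (Dg (x + v) A - Dg x A - H v) \<le> e / (2 * C) * norm v"
    if "norm v < min d0 d1" for v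
    using that d0(2) d1(2)[of "x + v"] by (auto simp: subset_iff dist_norm)
  have linH: "linear H" using H has_derivative_linear by blast
  show ?thesis
  proof (intro exI[of _ "min d0 d1 / C"] conjI allI impI)
    show "min d0 d1 / C > 0" using d0 d1 C by simp
    fix h :: real assume h: "0 < h \<and> h < min d0 d1 / C"
    then have hC: "h * C < min d0 d1" using C by (simp add: pos_less_divide_eq)
    have small: "norm (t *\<^sub>R A + h *\<^sub>R B) \<le> h * C" "norm (t *\<^sub>R A) \<le> h * C"
      if "t \<in> {0..h}" for t
    proof -
      have "norm (t *\<^sub>R A) \<le> h * norm A" using that by (simp add: mult_right_mono)
      moreover have "norm (t *\<^sub>R A + h *\<^sub>R B) \<le> norm (t *\<^sub>R A) + h * norm B"
        using norm_triangle_ineq[of "t *\<^sub>R A" "h *\<^sub>R B"] h by simp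
      moreover have "h * norm A + h * norm B \<le> h * C" "h * norm B \<ge> 0"
        using h by (simp_all add: C_def algebra_simps)
      ultimately show "norm (t *\<^sub>R A + h *\<^sub>R B) \<le> h * C" "norm (t *\<^sub>R A) \<le> h * C"
        by linarith+
    qed
    have inU: "x + t *\<^sub>R A + h *\<^sub>R B \<in> U" "x + t *\<^sub>R A \<in> U" if t: "t \<in> {0..h}" for t
      using near[of "t *\<^sub>R A + h *\<^sub>R B"] near[of "t *\<^sub>R A"] small[OF t] hC
      by (auto simp: add.assoc)
    have "2 * (e / (2 * C)) * (h * C) = e * h" using C by (simp add: field_simps)
    then have bound: "norm (Dg (x + t *\<^sub>R A + h *\<^sub>R B) A - Dg (x + t *\<^sub>R A) A - h *\<^sub>R H B) \<le> e * h"
      if t: "t \<in> {0..h}" for t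
      using derivative_increment_bound[where Dg = Dg and \<epsilon> = "e / (2 * C)",
          OF _ linH _ small[OF t] hC] near e C
      by auto
    have "norm (g (x + h *\<^sub>R A + h *\<^sub>R B) - g (x + h *\<^sub>R A) - g (x + h *\<^sub>R B) + g x
        - (h * h) *\<^sub>R H B) \<le> h * (e * h)"
      using h Dg[OF inU(1)] Dg[OF inU(2)] bound
      by (intro second_difference_bound[where Dg = Dg]) auto
    then show "norm (g (x + h *\<^sub>R A + h *\<^sub>R B) - g (x + h *\<^sub>R A) - g (x + h *\<^sub>R B) + g x
        - (h * h) *\<^sub>R H B) \<le> e * (h * h)"
      by (simp add: algebra_simps)
  qed
qed

text \<open>Schwarz's theorem: the second derivative \<open>H A B = D(D g(\<cdot>) A)(x) B\<close> of a function
  whose first derivative is differentiable at \<open>x\<close> is symmetric, since \<open>\<Delta>(h)\<close> is symmetric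
  in \<open>A\<close> and \<open>B\<close>.\<close>

lemma second_derivative_symmetric:
  fixes g :: "'a::real_normed_vector \<Rightarrow> 'b::real_inner"
  assumes U: "open U" "x \<in> U"
    and Dg: "\<And>y. y \<in> U \<Longrightarrow> (g has_derivative Dg y) (at y)"
    and H: "\<And>z. ((\<lambda>y. Dg y z) has_derivative H z) (at x)"
  shows "H A B = H B A"
proof (rule ccontr)
  assume ne: "H A B \<noteq> H B A"
  define e where "e = norm (H A B - H B A) / 4"
  have e: "e > 0" using ne by (simp add: e_def)
  define \<Delta> where "\<Delta> h = g (x + h *\<^sub>R A + h *\<^sub>R B) - g (x + h *\<^sub>R A) - g (x + h *\<^sub>R B) + g x" for h
  have \<Delta>_sym: "\<Delta> h = g (x + h *\<^sub>R B + h *\<^sub>R A) - g (x + h *\<^sub>R B) - g (x + h *\<^sub>R A) + g x" for h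
    by (simp add: \<Delta>_def algebra_simps)
  obtain d1 where d1: "d1 > 0" "\<forall>h. 0 < h \<and> h < d1 \<longrightarrow> norm (\<Delta> h - (h * h) *\<^sub>R H A B) \<le> e * (h * h)"
    using second_difference_asymptotics[OF U Dg H e] unfolding \<Delta>_def by blast
  obtain d2 where d2: "d2 > 0" "\<forall>h. 0 < h \<and> h < d2 \<longrightarrow> norm (\<Delta> h - (h * h) *\<^sub>R H B A) \<le> e * (h * h)"
    using second_difference_asymptotics[OF U Dg H e] unfolding \<Delta>_sym by blast
  define h where "h = min d1 d2 / 2"
  have h: "0 < h" "h < d1" "h < d2" using d1 d2 by (auto simp: h_def)
  have "(h * h) *\<^sub>R (H A B - H B A) = (\<Delta> h - (h * h) *\<^sub>R H B A) - (\<Delta> h - (h * h) *\<^sub>R H A B)"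
    by (simp add: algebra_simps)
  then have "norm ((h * h) *\<^sub>R (H A B - H B A))
      \<le> norm (\<Delta> h - (h * h) *\<^sub>R H B A) + norm (\<Delta> h - (h * h) *\<^sub>R H A B)"
    by (metis norm_triangle_ineq4)
  moreover have "norm ((h * h) *\<^sub>R (H A B - H B A)) = (h * h) * norm (H A B - H B A)"
    using h by simp
  moreover have "norm (\<Delta> h - (h * h) *\<^sub>R H A B) \<le> e * (h * h)"
    and "norm (\<Delta> h - (h * h) *\<^sub>R H B A) \<le> e * (h * h)"
    using d1(2) d2(2) h by blast+
  ultimately have "(h * h) * norm (H A B - H B A) \<le> e * (h * h) + e * (h * h)"
    by linarith
  then have "(h * h) * norm (H A B - H B A) \<le> (h * h) * (2 * e)"
    by (simp add: algebra_simps)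
  then have "norm (H A B - H B A) \<le> 2 * e" using h by (simp add: mult_le_cancel_left_pos)
  then show False using e unfolding e_def by simp
qed


section \<open>Differentiable dependence of solutions of linear systems\<close>

lemma linear_family_perturbation:
  fixes A :: "'p::topological_space \<Rightarrow> 'e::euclidean_space \<Rightarrow> 'f::real_normed_vector"
  assumes lin: "\<And>y. linear (A y)" and cont: "\<And>z. ((\<lambda>y. A y z) \<longlongrightarrow> A x z) (at x)"
  obtains \<delta> where "(\<delta> \<longlongrightarrow> 0) (at x)" "\<And>y. \<delta> y \<ge> 0"
    "\<And>y z. norm (A y z - A x z) \<le> \<delta> y * norm z"
proof
  define \<delta> where "\<delta> y = (\<Sum>i\<in>Basis. norm (A y i - A x i))" for y
  show "\<delta> y \<ge> 0" for y by (simp add: \<delta>_def sum_nonneg)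
  have "((\<lambda>y. norm (A y i - A x i)) \<longlongrightarrow> 0) (at x)" for i
    using tendsto_diff[OF cont[of i] tendsto_const[of "A x i"]] by (simp add: tendsto_norm_zero)
  then show "(\<delta> \<longlongrightarrow> 0) (at x)"
    unfolding \<delta>_def by (rule tendsto_null_sum)
  fix y z
  have lin_diff: "linear (\<lambda>z. A y z - A x z)" using lin by (simp add: linear_compose_sub)
  have "A y z - A x z = (\<Sum>i\<in>Basis. (z \<bullet> i) *\<^sub>R (A y i - A x i))"
    using linear_basis_expansion[OF lin_diff] by simp
  also have "norm \<dots> \<le> (\<Sum>i\<in>Basis. norm z * norm (A y i - A x i))"
    by (intro order_trans[OF norm_sum] sum_mono) (simp add: Basis_le_norm mult_right_mono)
  finally show "norm (A y z - A x z) \<le> \<delta> y * norm z"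
    by (simp add: \<delta>_def sum_distrib_left mult.commute)
qed

text \<open>An injective linear map is bounded below, and this persists under small
  perturbations: near \<open>x\<close> all \<open>A y\<close> are uniformly bounded below.\<close>

lemma linear_family_bounded_below:
  fixes A :: "'p::topological_space \<Rightarrow> 'e::euclidean_space \<Rightarrow> 'e"
  assumes lin: "\<And>y. linear (A y)" and cont: "\<And>z. ((\<lambda>y. A y z) \<longlongrightarrow> A x z) (at x)"
    and inj: "inj (A x)"
  obtains m where "m > 0" "\<forall>\<^sub>F y in at x. \<forall>z. m * norm z \<le> norm (A y z)"
proof -
  obtain m where m: "m > 0" "\<And>z. m * norm z \<le> norm (A x z)"
    using linear_inj_bounded_below_pos[OF lin inj] by blast
  obtain \<delta> where \<delta>: "(\<delta> \<longlongrightarrow> 0) (at x)" "\<And>y. \<delta> y \<ge> 0"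
      "\<And>y z. norm (A y z - A x z) \<le> \<delta> y * norm z"
    using linear_family_perturbation[OF lin cont] by blast
  have "\<forall>\<^sub>F y in at x. \<delta> y < m / 2" using order_tendstoD(2)[OF \<delta>(1), of "m / 2"] m by simp
  then have "\<forall>\<^sub>F y in at x. \<forall>z. m / 2 * norm z \<le> norm (A y z)"
  proof (rule eventually_mono, intro allI)
    fix y and z :: 'e assume "\<delta> y < m / 2"
    then have "\<delta> y * norm z \<le> m / 2 * norm z" by (intro mult_right_mono) auto
    moreover have "norm (A x z) - norm (A y z) \<le> \<delta> y * norm z"
      using \<delta>(3)[of y z] norm_triangle_ineq3[of "A y z" "A x z"] by (simp add: norm_minus_commute)
    ultimately show "m / 2 * norm z \<le> norm (A y z)" using m(2)[of z] by linarith
  qed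
  then show ?thesis using that[of "m / 2"] m by simp
qed

text \<open>If \<open>A y (c y) = b y\<close> near \<open>x\<close>, where \<open>A\<close> and \<open>b\<close> are differentiable at \<open>x\<close> and \<open>A x\<close>
  is injective, then \<open>c\<close> is differentiable at \<open>x\<close>, with the derivative obtained by
  differentiating the equation: \<open>A x (c' v) = b' v - A' (c x) v\<close>.\<close>

lemma linear_system_solution_differentiable:
  fixes A :: "'p::real_normed_vector \<Rightarrow> 'e::euclidean_space \<Rightarrow> 'e"
  assumes lin: "\<And>y. linear (A y)"
    and dA: "\<And>z. ((\<lambda>y. A y z) has_derivative A' z) (at x)"
    and db: "(b has_derivative b') (at x)"
    and inj: "inj (A x)"
    and S: "open S" "x \<in> S" "\<And>y. y \<in> S \<Longrightarrow> A y (c y) = b y"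
  shows "c differentiable (at x)"
proof -
  have cont: "((\<lambda>y. A y z) \<longlongrightarrow> A x z) (at x)" for z
    using dA[of z] has_derivative_continuous continuous_at by blast
  obtain m where m: "m > 0" "\<forall>\<^sub>F y in at x. \<forall>z. m * norm z \<le> norm (A y z)"
    using linear_family_bounded_below[OF lin cont inj] by blast
  obtain \<delta> where \<delta>: "(\<delta> \<longlongrightarrow> 0) (at x)" "\<And>y. \<delta> y \<ge> 0"
      "\<And>y z. norm (A y z - A x z) \<le> \<delta> y * norm z"
    using linear_family_perturbation[OF lin cont] by blast
  obtain g where g: "linear g" "\<And>z. A x (g z) = z"
    using linear_injective_isomorphism[OF lin inj] by blast
  define c' where "c' v = g (b' v - A' (c x) v)" for v
  have "bounded_linear (\<lambda>v. b' v - A' (c x) v)"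
    using db dA[of "c x"] by (intro bounded_linear_sub) (auto dest: has_derivative_bounded_linear)
  with g(1) have "bounded_linear c'"
    unfolding c'_def linear_conv_bounded_linear by (rule bounded_linear_compose)
  then obtain K where K: "\<And>v. norm (c' v) \<le> K * norm v"
    using bounded_linear.pos_bounded by (metis mult.commute)
  define r1 where "r1 y = norm (b y - b x - b' (y - x)) / norm (y - x)" for y
  define r2 where "r2 y = norm (A y (c x) - A x (c x) - A' (c x) (y - x)) / norm (y - x)" for y
  have r1: "(r1 \<longlongrightarrow> 0) (at x)" using db unfolding has_derivative_iff_norm r1_def by simp
  have r2: "(r2 \<longlongrightarrow> 0) (at x)" using dA[of "c x"] unfolding has_derivative_iff_norm r2_def by simp
  have "\<forall>\<^sub>F y in at x. y \<in> S" using S(1,2) unfolding eventually_at_topological by blast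
  moreover note m(2)
  moreover have "\<forall>\<^sub>F y in at x. y \<noteq> x" by (simp add: eventually_at_filter)
  ultimately have "\<forall>\<^sub>F y in at x. norm (norm (c y - c x - c' (y - x)) / norm (y - x))
      \<le> (1 / m) * (r1 y + r2 y + \<delta> y * K)"
  proof eventually_elim
    case (elim y)
    define v w where "v = y - x" and "w = c y - c x - c' (y - x)"
    have "A y w = (b y - b x - b' v) - (A y (c x) - A x (c x) - A' (c x) v)
        - (A y (c' v) - A x (c' v))"
      using S(3)[OF elim(1)] S(3)[OF S(2)] g(2)[of "b' v - A' (c x) v"] lin[of y]
      by (simp add: w_def v_def c'_def linear_diff[OF lin] linear_add[OF lin] algebra_simps)
    then have "norm (A y w) \<le> norm (b y - b x - b' v) + norm (A y (c x) - A x (c x) - A' (c x) v)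
        + \<delta> y * (K * norm v)"
      using norm_triangle_ineq4 \<delta>(3)[of y "c' v"] mult_left_mono[OF K \<delta>(2)]
      by (smt (verit, ccfv_threshold))
    moreover have "m * norm w \<le> norm (A y w)" using elim(2) by blast
    moreover have "norm v > 0" using elim(3) by (simp add: v_def)
    ultimately have "m * norm w \<le> (r1 y + r2 y + \<delta> y * K) * norm v"
      by (simp add: r1_def r2_def v_def algebra_simps)
    then show ?case using m(1) \<open>norm v > 0\<close> by (simp add: w_def v_def field_simps)
  qed
  moreover have "((\<lambda>y. (1 / m) * (r1 y + r2 y + \<delta> y * K)) \<longlongrightarrow> 0) (at x)"
    using tendsto_mult_left[OF tendsto_add[OF tendsto_add[OF r1 r2] tendsto_mult_right[OF \<delta>(1)]],
        of "1 / m" K] by simp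
  ultimately have "((\<lambda>y. norm (c y - c x - c' (y - x)) / norm (y - x)) \<longlongrightarrow> 0) (at x)"
    by (rule Lim_null_comparison)
  with \<open>bounded_linear c'\<close> have "(c has_derivative c') (at x)"
    unfolding has_derivative_iff_norm by simp
  then show ?thesis by (auto simp: differentiable_def)
qed


section \<open>Inversion in the unit sphere\<close>

definition inversion :: "'a::real_inner \<Rightarrow> 'a" where
  "inversion v = (1 / (norm v)\<^sup>2) *\<^sub>R v"

definition inversion_deriv :: "'a::real_inner \<Rightarrow> 'a \<Rightarrow> 'a" where
  "inversion_deriv u a = (1 / inner u u) *\<^sub>R a - (2 * inner u a / (inner u u)\<^sup>2) *\<^sub>R u"

lemma has_derivative_inversion:
  fixes u :: "'a::real_inner"
  assumes "u \<noteq> 0"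
  shows "(inversion has_derivative inversion_deriv u) (at u)"
proof -
  have inv: "inversion = (\<lambda>v. inverse (inner v v) *\<^sub>R v)"
    by (simp add: fun_eq_iff inversion_def power2_norm_eq_inner divide_inverse)
  have "((\<lambda>v. inverse (inner v v) *\<^sub>R v) has_derivative
      (\<lambda>a. inverse (inner u u) *\<^sub>R a
        - (inverse (inner u u) * (inner a u + inner u a) * inverse (inner u u)) *\<^sub>R u)) (at u)"
    using assms by (auto intro!: derivative_eq_intros)
  moreover have "(\<lambda>a. inverse (inner u u) *\<^sub>R a
        - (inverse (inner u u) * (inner a u + inner u a) * inverse (inner u u)) *\<^sub>R u)
      = inversion_deriv u"
    by (simp add: fun_eq_iff inversion_deriv_def inner_commute power2_eq_square field_simps)
  ultimately show ?thesis unfolding inv by simp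
qed

lemma inversion_deriv_iscale:
  fixes u a a' n :: "complex^'m"
  assumes u: "u \<noteq> 0"
    and sum: "a' + \<i> *s a = - 2 *\<^sub>R (\<i> *s n)"
    and along: "inner u a = - inner u n" "inner u a' = - inner u (\<i> *s n)"
  shows "inversion_deriv u a' + \<i> *s inversion_deriv u a
    = (- 2 / inner u u) *\<^sub>R (\<i> *s (n - orth_proj (span {u, \<i> *s u}) n))"
proof -
  define r where "r = inner u u"
  have r: "r > 0" using u by (simp add: r_def)
  have "inversion_deriv u a' + \<i> *s inversion_deriv u a
      = (1 / r) *\<^sub>R (a' + \<i> *s a) - (2 * inner u a' / r\<^sup>2) *\<^sub>R u - (2 * inner u a / r\<^sup>2) *\<^sub>R (\<i> *s u)"
    by (simp add: inversion_deriv_def r_def iscale_add iscale_diff iscale_scaleR algebra_simps)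
  also have "\<dots> = (- 2 / r) *\<^sub>R (\<i> *s n) - (2 * inner n (\<i> *s u) / r\<^sup>2) *\<^sub>R u
      + (2 * inner n u / r\<^sup>2) *\<^sub>R (\<i> *s u)"
  proof -
    have "inner u a' = inner n (\<i> *s u)"
      using along(2) inner_iscale_left[of n u] by (simp add: inner_commute)
    then show ?thesis using along(1) by (simp add: sum inner_commute)
  qed
  also have "\<dots> = (- 2 / r) *\<^sub>R (\<i> *s (n - ((inner n u / r) *\<^sub>R u + (inner n (\<i> *s u) / r) *\<^sub>R (\<i> *s u))))"
    using r by (simp add: iscale_add iscale_diff iscale_scaleR iscale_iscale power2_eq_square
        algebra_simps)
  finally show ?thesis
    using orth_proj_complex_line[OF u, of n] by (simp add: r_def)
qed


section \<open>Local geometry of a holomorphic immersion\<close>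

locale holomorphic_immersion =
  fixes f :: "complex^'n \<Rightarrow> complex^'m" and U :: "(complex^'n) set"
  assumes open_U: "open U"
    and holomorphic: "cx_holomorphic f U"
    and immersion: "cx_immersion f U"
    and second_derivative: "\<forall>Y. (\<lambda>y. frechet_derivative f (at y) Y) differentiable_on U"
begin

abbreviation df :: "complex^'n \<Rightarrow> complex^'n \<Rightarrow> complex^'m" where
  "df y \<equiv> frechet_derivative f (at y)"

abbreviation d2f :: "complex^'n \<Rightarrow> complex^'n \<Rightarrow> complex^'n \<Rightarrow> complex^'m" where
  "d2f x Y \<equiv> frechet_derivative (\<lambda>y. df y Y) (at x)"

lemma df_has_derivative: "y \<in> U \<Longrightarrow> (f has_derivative df y) (at y)"
  using immersion unfolding cx_immersion_def by (simp add: frechet_derivative_works)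

lemma df_linear: "y \<in> U \<Longrightarrow> linear (df y)"
  using df_has_derivative has_derivative_linear by blast

lemma df_inj: "y \<in> U \<Longrightarrow> inj (df y)"
  using immersion unfolding cx_immersion_def by simp

lemma df_complex_linear: "y \<in> U \<Longrightarrow> df y (c *s v) = c *s df y v"
proof -
  assume y: "y \<in> U"
  obtain L where L: "(f has_derivative L) (at y)" "\<forall>c v. L (c *s v) = c *s L v"
    using holomorphic y unfolding cx_holomorphic_def by blast
  have "L = df y" using L(1) by (rule frechet_derivative_at)
  with L(2) show ?thesis by simp
qed

lemma d2f_has_derivative: "x \<in> U \<Longrightarrow> ((\<lambda>y. df y Y) has_derivative d2f x Y) (at x)"
  using second_derivative open_U
  by (simp add: differentiable_on_eq_differentiable_at frechet_derivative_works)

lemma d2f_symmetric: "x \<in> U \<Longrightarrow> d2f x Y X = d2f x X Y"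
  using open_U df_has_derivative d2f_has_derivative
  by (intro second_derivative_symmetric[where g = f and U = U]) auto

lemma d2f_linear: "x \<in> U \<Longrightarrow> linear (d2f x Y)"
  using d2f_has_derivative has_derivative_linear by blast

text \<open>The second derivative is complex linear in each argument; this is where the
  holomorphy of \<open>f\<close> enters the second fundamental form.\<close>

lemma d2f_iscale_left: "x \<in> U \<Longrightarrow> d2f x (\<i> *s Y) X = \<i> *s d2f x Y X"
proof -
  assume x: "x \<in> U"
  have "((\<lambda>y. \<i> *s df y Y) has_derivative (\<lambda>X. \<i> *s d2f x Y X)) (at x)"
    using bounded_linear.has_derivative[OF bounded_linear_iscale d2f_has_derivative[OF x]] .
  then have "((\<lambda>y. df y (\<i> *s Y)) has_derivative (\<lambda>X. \<i> *s d2f x Y X)) (at x)"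
    by (rule has_derivative_transform_within_open[OF _ open_U x]) (simp add: df_complex_linear)
  from fun_cong[OF frechet_derivative_at[OF this], of X] show ?thesis by simp
qed

lemma d2f_iscale_right: "x \<in> U \<Longrightarrow> d2f x Y (\<i> *s X) = \<i> *s d2f x Y X"
  by (metis d2f_symmetric d2f_iscale_left)

lemma tangent_space_subspace: "y \<in> U \<Longrightarrow> subspace (tangent_space f y)"
  unfolding tangent_space_def by (simp add: df_linear subspace_UNIV linear_subspace_image)

lemma tangent_iscale: "y \<in> U \<Longrightarrow> v \<in> tangent_space f y \<Longrightarrow> \<i> *s v \<in> tangent_space f y"
  unfolding tangent_space_def by (auto simp: df_complex_linear[symmetric])

lemma normal_iscale:
  "y \<in> U \<Longrightarrow> \<forall>t\<in>tangent_space f y. inner w t = 0 \<Longrightarrow> \<forall>t\<in>tangent_space f y. inner (\<i> *s w) t = 0"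
  by (auto simp: inner_iscale_left tangent_iscale)

lemma tan_part_works:
  "y \<in> U \<Longrightarrow> tan_part f y w \<in> tangent_space f y
    \<and> (\<forall>t\<in>tangent_space f y. inner (w - tan_part f y w) t = 0)"
  unfolding tan_part_def by (rule orth_proj_works[OF tangent_space_subspace])

lemma tan_part_unique:
  "y \<in> U \<Longrightarrow> v \<in> tangent_space f y \<Longrightarrow> \<forall>t\<in>tangent_space f y. inner (w - v) t = 0
    \<Longrightarrow> tan_part f y w = v"
  unfolding tan_part_def by (rule orth_proj_unique[OF tangent_space_subspace])

lemma nor_part_normal: "y \<in> U \<Longrightarrow> inner (nor_part f y w) (df y Z) = 0"
  using tan_part_works unfolding nor_part_def tangent_space_def by blast

lemma tan_part_linear: "y \<in> U \<Longrightarrow> linear (tan_part f y)"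
proof (rule linearI)
  assume y: "y \<in> U"
  note works = tan_part_works[OF y] and sub = tangent_space_subspace[OF y]
  show "tan_part f y (v + w) = tan_part f y v + tan_part f y w" for v w
  proof (rule tan_part_unique[OF y])
    show "tan_part f y v + tan_part f y w \<in> tangent_space f y"
      using works subspace_add[OF sub] by blast
    have "v + w - (tan_part f y v + tan_part f y w) = (v - tan_part f y v) + (w - tan_part f y w)"
      by simp
    then show "\<forall>t\<in>tangent_space f y. inner (v + w - (tan_part f y v + tan_part f y w)) t = 0"
      using works[of v] works[of w] by (simp only: inner_add_left) simp
  qed
  show "tan_part f y (c *\<^sub>R v) = c *\<^sub>R tan_part f y v" for c v
  proof (rule tan_part_unique[OF y])
    show "c *\<^sub>R tan_part f y v \<in> tangent_space f y"
      using works subspace_scale[OF sub] by blast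
    show "\<forall>t\<in>tangent_space f y. inner (c *\<^sub>R v - c *\<^sub>R tan_part f y v) t = 0"
      using works[of v] by (simp add: scaleR_diff_right[symmetric])
  qed
qed

lemma nor_part_linear: "y \<in> U \<Longrightarrow> linear (nor_part f y)"
  unfolding nor_part_def[abs_def] using tan_part_linear linear_ident
  by (intro linear_compose_sub) (auto simp: id_def)

lemma nor_part_tangent: "y \<in> U \<Longrightarrow> nor_part f y (df y v) = 0"
  unfolding nor_part_def
  by (subst tan_part_unique[of y "df y v"]) (auto simp: tangent_space_def)

text \<open>The normal projection commutes with \<open>J\<close>, because tangent and normal spaces are
  both \<open>J\<close>-invariant.\<close>

lemma nor_part_iscale: "y \<in> U \<Longrightarrow> nor_part f y (\<i> *s w) = \<i> *s nor_part f y w"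
proof -
  assume y: "y \<in> U"
  have "tan_part f y (\<i> *s w) = \<i> *s tan_part f y w"
  proof (rule tan_part_unique[OF y])
    show "\<i> *s tan_part f y w \<in> tangent_space f y"
      using tangent_iscale[OF y] tan_part_works[OF y] by blast
    have "\<forall>t\<in>tangent_space f y. inner (\<i> *s (w - tan_part f y w)) t = 0"
      using tan_part_works[OF y] by (intro normal_iscale[OF y]) blast
    then show "\<forall>t\<in>tangent_space f y. inner (\<i> *s w - \<i> *s tan_part f y w) t = 0"
      by (simp add: iscale_diff)
  qed
  then show ?thesis by (simp add: nor_part_def iscale_diff)
qed

lemma sff_iscale: "x \<in> U \<Longrightarrow> sff f x (\<i> *s X) Y = \<i> *s sff f x X Y"
  by (simp add: sff_def d2f_iscale_right nor_part_iscale)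


section \<open>The normal component of the position vector\<close>

definition fT_coord :: "complex^'n \<Rightarrow> complex^'n" where
  "fT_coord y = (SOME c. df y c = fT f y)"

lemma df_fT_coord: "y \<in> U \<Longrightarrow> df y (fT_coord y) = fT f y"
proof -
  assume y: "y \<in> U"
  have "\<exists>c. df y c = fT f y"
    using tan_part_works[OF y] unfolding fT_def tangent_space_def by (metis rangeE)
  then show ?thesis unfolding fT_coord_def by (rule someI_ex)
qed

lemma df_eq_fT_iff: "y \<in> U \<Longrightarrow> df y Y = fT f y \<longleftrightarrow> Y = fT_coord y"
  using df_fT_coord df_inj by (metis injD)

lemma fN_eq: "y \<in> U \<Longrightarrow> fN f y = f y - df y (fT_coord y)"
  by (simp add: fN_def fT_def nor_part_def df_fT_coord)

lemma fN_normal: "y \<in> U \<Longrightarrow> inner (fN f y) (df y Z) = 0"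
  unfolding fN_def by (rule nor_part_normal)

text \<open>\<open>\<xi> = fT_coord y\<close> solves the Gram system \<open>\<langle>f\<^sub>* \<xi>, f\<^sub>* b\<rangle> = \<langle>f, f\<^sub>* b\<rangle>\<close> (\<open>b\<close> ranging over a
  real basis), whose matrix and right-hand side are differentiable; as the Gram matrix of an
  injective map is invertible, \<open>\<xi>\<close> is differentiable.\<close>

text \<open>Outside \<open>U\<close> the Gram map is set to the identity, so that it is linear everywhere.\<close>

definition gram :: "complex^'n \<Rightarrow> complex^'n \<Rightarrow> complex^'n" where
  "gram y z = (if y \<in> U then (\<Sum>b\<in>Basis. inner (df y z) (df y b) *\<^sub>R b) else z)"

definition gram_rhs :: "complex^'n \<Rightarrow> complex^'n" where
  "gram_rhs y = (\<Sum>b\<in>Basis. inner (f y) (df y b) *\<^sub>R b)"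

text \<open>The Gram system is linear, solved by \<open>\<xi>\<close>, and injective (its quadratic form is
  \<open>|f\<^sub>* z|\<^sup>2\<close>).\<close>

lemma gram_linear: "linear (gram y)"
proof (cases "y \<in> U")
  case True
  note l = df_linear[OF True]
  show ?thesis unfolding gram_def using True
    by (intro linearI) (simp_all add: linear_add[OF l] linear_scale[OF l] inner_add_left
        scaleR_add_left sum.distrib scaleR_right.sum)
next
  case False
  then have "gram y = id" by (simp add: gram_def fun_eq_iff)
  then show ?thesis by (simp add: linear_id)
qed

lemma gram_fT_coord: "y \<in> U \<Longrightarrow> gram y (fT_coord y) = gram_rhs y"
proof -
  assume y: "y \<in> U"
  have "inner (df y (fT_coord y)) (df y b) = inner (f y) (df y b)" for b
    using fN_normal[OF y, of b] fN_eq[OF y] by (simp add: inner_diff_left)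
  then show ?thesis unfolding gram_def gram_rhs_def using y by simp
qed

lemma gram_inj: "x \<in> U \<Longrightarrow> inj (gram x)"
proof -
  assume x: "x \<in> U"
  note l = df_linear[OF x]
  have "z = 0" if "gram x z = 0" for z
  proof -
    have "inner z (gram x z) = (\<Sum>b\<in>Basis. inner (df x z) (df x b) * inner z b)"
      using x by (simp add: gram_def inner_sum_right)
    also have "\<dots> = inner (df x z) (\<Sum>b\<in>Basis. inner z b *\<^sub>R df x b)"
      by (simp add: inner_sum_right mult.commute)
    also have "(\<Sum>b\<in>Basis. inner z b *\<^sub>R df x b) = df x z"
      by (rule linear_basis_expansion[OF l])
    finally have "df x z = 0" using that by simp
    then show "z = 0" using df_inj[OF x] linear_0[OF l] by (metis injD)
  qed
  then show ?thesis using linear_injective_0[OF gram_linear] by blast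
qed

lemma frame_coefficients_differentiable:
  assumes "x \<in> U" "g differentiable (at x)"
  shows "(\<lambda>y. \<Sum>b\<in>Basis. inner (g y) (df y b) *\<^sub>R b) differentiable (at x)"
proof (intro differentiable_sum ballI differentiable_scaleR differentiable_const)
  fix b :: "complex^'n"
  have "(\<lambda>y. df y b) differentiable (at x)"
    using d2f_has_derivative[OF assms(1)] by (auto simp: differentiable_def)
  with assms(2) show "(\<lambda>y. inner (g y) (df y b)) differentiable (at x)"
    by (rule differentiable_inner)
qed simp

lemma gram_differentiable: "x \<in> U \<Longrightarrow> (\<lambda>y. gram y z) differentiable (at x)"
proof -
  assume x: "x \<in> U"
  have "(\<lambda>y. df y z) differentiable (at x)"
    using d2f_has_derivative[OF x] by (auto simp: differentiable_def)
  then obtain D where "((\<lambda>y. \<Sum>b\<in>Basis. inner (df y z) (df y b) *\<^sub>R b) has_derivative D) (at x)"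
    using frame_coefficients_differentiable[OF x] by (auto simp: differentiable_def)
  then have "((\<lambda>y. gram y z) has_derivative D) (at x)"
    by (rule has_derivative_transform_within_open[OF _ open_U x]) (simp add: gram_def)
  then show ?thesis by (auto simp: differentiable_def)
qed

lemma gram_rhs_differentiable: "x \<in> U \<Longrightarrow> gram_rhs differentiable (at x)"
  unfolding gram_rhs_def[abs_def] using df_has_derivative
  by (intro frame_coefficients_differentiable) (auto simp: differentiable_def)

lemma fT_coord_differentiable: "x \<in> U \<Longrightarrow> fT_coord differentiable (at x)"
  using gram_differentiable gram_rhs_differentiable
  by (intro linear_system_solution_differentiable[where A = gram and S = U
        and A' = "\<lambda>z. frechet_derivative (\<lambda>y. gram y z) (at x)"
        and b' = "frechet_derivative gram_rhs (at x)"])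
     (simp_all add: gram_linear gram_inj gram_fT_coord open_U frechet_derivative_works)


text \<open>Differentiating \<open>f\<^sup>N = f - f\<^sub>* \<xi>\<close> gives
  \<open>(f\<^sup>N)\<^sub>* X = f\<^sub>* X - f\<^sub>* (\<xi>\<^sub>* X) - D\<^sup>2 f(\<xi>, X)\<close>.\<close>

definition dfN :: "complex^'n \<Rightarrow> complex^'n \<Rightarrow> complex^'m" where
  "dfN x X = df x X - df x (frechet_derivative fT_coord (at x) X) - d2f x (fT_coord x) X"

lemma df_apply_has_derivative:
  assumes x: "x \<in> U" and c: "(c has_derivative c') (at x)"
  shows "((\<lambda>y. df y (c y)) has_derivative (\<lambda>X. df x (c' X) + d2f x (c x) X)) (at x)"
proof -
  have "((\<lambda>y. \<Sum>b\<in>Basis. inner (c y) b *\<^sub>R df y b) has_derivative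
      (\<lambda>X. \<Sum>b\<in>Basis. inner (c x) b *\<^sub>R d2f x b X + inner (c' X) b *\<^sub>R df x b)) (at x)"
    by (intro has_derivative_sum has_derivative_scaleR has_derivative_inner_left c d2f_has_derivative[OF x])
  moreover have "(\<lambda>X. \<Sum>b\<in>Basis. inner (c x) b *\<^sub>R d2f x b X + inner (c' X) b *\<^sub>R df x b)
      = (\<lambda>X. df x (c' X) + d2f x (c x) X)"
  proof
    fix X
    have "linear (\<lambda>Z. d2f x Z X)"
      using d2f_linear[OF x, of X] d2f_symmetric[OF x] by (metis (no_types, lifting) ext)
    then show "(\<Sum>b\<in>Basis. inner (c x) b *\<^sub>R d2f x b X + inner (c' X) b *\<^sub>R df x b)
        = df x (c' X) + d2f x (c x) X"
      using linear_basis_expansion[OF df_linear[OF x], of "c' X"]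
        linear_basis_expansion[of "\<lambda>Z. d2f x Z X" "c x"]
      by (simp add: sum.distrib add.commute)
  qed
  ultimately show ?thesis
    by (auto elim!: has_derivative_transform_within_open[OF _ open_U x]
        simp: linear_basis_expansion df_linear)
qed

lemma fN_has_derivative: "x \<in> U \<Longrightarrow> (fN f has_derivative dfN x) (at x)"
proof -
  assume x: "x \<in> U"
  have "(fT_coord has_derivative frechet_derivative fT_coord (at x)) (at x)"
    using fT_coord_differentiable[OF x] frechet_derivative_works by blast
  from has_derivative_diff[OF df_has_derivative[OF x] df_apply_has_derivative[OF x this]]
  have "((\<lambda>y. f y - df y (fT_coord y)) has_derivative dfN x) (at x)"
    by (simp add: dfN_def[abs_def] algebra_simps)
  then show ?thesis
    by (rule has_derivative_transform_within_open[OF _ open_U x]) (simp add: fN_eq)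
qed

text \<open>Tangent components of \<open>(f\<^sup>N)\<^sub>*\<close> (Weingarten): differentiate \<open>\<langle>f\<^sup>N, f\<^sub>* Z\<rangle> = 0\<close>.\<close>

lemma dfN_tangent: "x \<in> U \<Longrightarrow> inner (dfN x X) (df x Z) = - inner (fN f x) (d2f x Z X)"
proof -
  assume x: "x \<in> U"
  have "((\<lambda>y. inner (fN f y) (df y Z)) has_derivative
      (\<lambda>X. inner (fN f x) (d2f x Z X) + inner (dfN x X) (df x Z))) (at x)"
    by (rule has_derivative_inner[OF fN_has_derivative[OF x] d2f_has_derivative[OF x]])
  moreover have "((\<lambda>y. inner (fN f y) (df y Z)) has_derivative (\<lambda>X. 0)) (at x)"
    by (rule has_derivative_transform_within_open[OF has_derivative_const open_U x])
       (simp add: fN_normal)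
  ultimately have "(\<lambda>X. inner (fN f x) (d2f x Z X) + inner (dfN x X) (df x Z)) = (\<lambda>X. 0)"
    by (rule has_derivative_unique)
  from fun_cong[OF this, of X] show ?thesis by linarith
qed

text \<open>Normal component of \<open>(f\<^sup>N)\<^sub>*\<close>: it is \<open>-\<alpha>(X, \<xi>)\<close>, as the first two terms of \<open>dfN\<close>
  are tangent.\<close>

lemma dfN_normal: "x \<in> U \<Longrightarrow> nor_part f x (dfN x X) = - sff f x X (fT_coord x)"
proof -
  assume x: "x \<in> U"
  note lin = nor_part_linear[OF x]
  have "dfN x X = df x (X - frechet_derivative fT_coord (at x) X) - d2f x (fT_coord x) X"
    by (simp add: dfN_def linear_diff[OF df_linear[OF x]])
  then show ?thesis
    by (simp add: linear_diff[OF lin] nor_part_tangent[OF x] sff_def)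
qed

text \<open>Since \<open>f\<^sup>N\<close> is normal, only the normal part of \<open>(f\<^sup>N)\<^sub>* X\<close> contributes to its
  \<open>f\<^sup>N\<close>-component.\<close>

lemma inner_fN_dfN: "x \<in> U \<Longrightarrow> inner (fN f x) (dfN x X) = - inner (fN f x) (sff f x X (fT_coord x))"
proof -
  assume x: "x \<in> U"
  have "inner (fN f x) (tan_part f x (dfN x X)) = 0"
    using tan_part_works[OF x, of "dfN x X"] fN_normal[OF x]
    by (metis rangeE tangent_space_def)
  moreover have "sff f x X (fT_coord x) = tan_part f x (dfN x X) - dfN x X"
    using dfN_normal[OF x, of X] unfolding nor_part_def by (metis minus_diff_eq minus_equation_iff)
  ultimately show ?thesis by (simp add: inner_diff_right)
qed

text \<open>The tangent parts
  cancel because \<open>D\<^sup>2 f\<close> is complex bilinear and the normal parts add up because \<open>\<alpha>\<close> is.\<close>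

lemma dfN_iscale:
  assumes x: "x \<in> U"
  shows "dfN x (\<i> *s X) + \<i> *s dfN x X = - 2 *\<^sub>R (\<i> *s sff f x X (fT_coord x))"
proof -
  define t where "t Y = tan_part f x (dfN x Y)" for Y
  define n where "n = sff f x X (fT_coord x)"
  have split: "dfN x Y = t Y - sff f x Y (fT_coord x)" for Y
    using dfN_normal[OF x, of Y] unfolding t_def nor_part_def by (simp add: diff_eq_eq)
  have t_tangent: "t Y \<in> tangent_space f x" for Y
    using tan_part_works[OF x] unfolding t_def by blast
  have t_inner: "inner (t Y) (df x Z) = inner (dfN x Y) (df x Z)" for Y Z
    using nor_part_normal[OF x, of "dfN x Y" Z] by (simp add: t_def nor_part_def inner_diff_left)
  have "t (\<i> *s X) + \<i> *s t X = 0"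
  proof -
    have "t (\<i> *s X) + \<i> *s t X \<in> tangent_space f x"
      using t_tangent tangent_iscale[OF x] subspace_add[OF tangent_space_subspace[OF x]] by blast
    moreover have "inner (t (\<i> *s X) + \<i> *s t X) (df x Z) = 0" for Z
      by (simp add: inner_add_left inner_iscale_left t_inner dfN_tangent[OF x]
          df_complex_linear[OF x, symmetric] d2f_iscale_left[OF x] d2f_iscale_right[OF x])
    ultimately show ?thesis
      unfolding tangent_space_def by (metis inner_eq_zero_iff rangeE)
  qed
  then show ?thesis
    unfolding split sff_iscale[OF x] n_def[symmetric]
    by (simp add: iscale_diff algebra_simps scaleR_2 eq_neg_iff_add_eq_0)
qed


section \<open>The anti-holomorphy criterion\<close>

lemma FN_has_derivative:
  "x \<in> U \<Longrightarrow> fN f x \<noteq> 0 \<Longrightarrow> (FN f has_derivative (\<lambda>X. inversion_deriv (fN f x) (dfN x X))) (at x)"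
  using diff_chain_at[OF fN_has_derivative has_derivative_inversion]
  by (simp add: FN_def[abs_def] inversion_def[abs_def] o_def)

text \<open>Pointwise criterion: \<open>F\<^sub>* \<circ> J = - J \<circ> F\<^sub>*\<close> at \<open>x\<close> iff \<open>\<alpha>\<^sup>\<perp>(\<cdot>, \<xi>) = 0\<close> at \<open>x\<close>, because
  \<open>F\<^sub>*(J X) + J F\<^sub>* X = -(2/|f\<^sup>N|\<^sup>2) J \<alpha>\<^sup>\<perp>(X, \<xi>)\<close>.\<close>

lemma antiholomorphic_at_iff:
  assumes x: "x \<in> U" and u: "fN f x \<noteq> 0"
  shows "(\<exists>L. (FN f has_derivative L) (at x) \<and> (\<forall>v. L (\<i> *s v) = - (\<i> *s L v)))
    \<longleftrightarrow> (\<forall>X. sff_perp f x X (fT_coord x) = 0)"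
proof -
  define DF where "DF X = inversion_deriv (fN f x) (dfN x X)" for X
  have identity: "DF (\<i> *s X) + \<i> *s DF X
      = (- 2 / inner (fN f x) (fN f x)) *\<^sub>R (\<i> *s sff_perp f x X (fT_coord x))" for X
    unfolding DF_def sff_perp_def
  proof (rule inversion_deriv_iscale[OF u dfN_iscale[OF x]])
    show "inner (fN f x) (dfN x X) = - inner (fN f x) (sff f x X (fT_coord x))"
      by (rule inner_fN_dfN[OF x])
    show "inner (fN f x) (dfN x (\<i> *s X)) = - inner (fN f x) (\<i> *s sff f x X (fT_coord x))"
      by (simp add: inner_fN_dfN[OF x] sff_iscale[OF x])
  qed
  have "(\<exists>L. (FN f has_derivative L) (at x) \<and> (\<forall>v. L (\<i> *s v) = - (\<i> *s L v)))
      \<longleftrightarrow> (\<forall>X. DF (\<i> *s X) = - (\<i> *s DF X))"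
    using FN_has_derivative[OF x u] has_derivative_unique unfolding DF_def by metis
  also have "\<dots> \<longleftrightarrow> (\<forall>X. DF (\<i> *s X) + \<i> *s DF X = 0)"
    by (simp add: eq_neg_iff_add_eq_0)
  also have "\<dots> \<longleftrightarrow> (\<forall>X. sff_perp f x X (fT_coord x) = 0)"
    using u by (simp add: identity iscale_eq_0_iff)
  finally show ?thesis .
qed

section \<open>Codimension one\<close>

text \<open>If \<open>p = 1\<close>, the normal space has real dimension 2 and is spanned by \<open>f\<^sup>N\<close> and \<open>J f\<^sup>N\<close>,
  so every normal vector, in particular every value of \<open>\<alpha>\<close>, has vanishing \<open>\<alpha>\<^sup>\<perp>\<close>.\<close>

lemma normal_space_complex_line:
  assumes x: "x \<in> U" and u: "fN f x \<noteq> 0" and card: "CARD('m) = CARD('n) + 1"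
  shows "span {fN f x, \<i> *s fN f x} = {w. \<forall>t \<in> tangent_space f x. orthogonal t w}"
proof -
  define u where "u = fN f x"
  define N where "N = {w. \<forall>t \<in> tangent_space f x. orthogonal t w}"
  have subN: "subspace N" unfolding N_def by (rule subspace_orthogonal_to_vectors)
  have "dim {w \<in> UNIV. \<forall>t \<in> tangent_space f x. orthogonal t w} + dim (tangent_space f x)
      = dim (UNIV :: (complex^'m) set)"
    by (rule dim_subspace_orthogonal_to_vectors) (simp_all add: tangent_space_subspace[OF x])
  then have "dim N + dim (tangent_space f x) = dim (UNIV :: (complex^'m) set)"
    by (simp add: N_def)
  moreover have "dim (tangent_space f x) = dim (UNIV :: (complex^'n) set)"
    using dim_image_eq[OF df_linear[OF x]] df_inj[OF x]
    by (simp add: tangent_space_def inj_on_def inj_def)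
  ultimately have dimN: "dim N = 2" using card by simp
  have "u \<in> N" "\<i> *s u \<in> N"
    using fN_normal[OF x] normal_iscale[OF x, of u]
    unfolding N_def u_def orthogonal_def tangent_space_def by (auto simp: inner_commute)
  then have sub: "span {u, \<i> *s u} \<subseteq> N" using subN by (simp add: span_minimal)
  have ne: "u \<noteq> \<i> *s u"
    using u inner_iscale_self[of u] unfolding u_def by (metis inner_eq_zero_iff)
  have "independent {u, \<i> *s u}"
    using u ne inner_iscale_self[of u]
    by (intro pairwise_orthogonal_independent)
       (auto simp: pairwise_def orthogonal_def u_def inner_commute iscale_eq_0_iff)
  then have "dim (span {u, \<i> *s u}) = 2" using ne by (simp add: dim_span dim_eq_card_independent)
  then show ?thesis
    using subspace_dim_equal[OF subspace_span subN sub] dimN unfolding u_def N_def by simp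
qed

lemma sff_perp_codim_one:
  assumes x: "x \<in> U" and u: "fN f x \<noteq> 0" and card: "CARD('m) = CARD('n) + 1"
  shows "sff_perp f x X Y = 0"
proof -
  have "inner (df x t) (sff f x X Y) = 0" for t
    by (simp only: sff_def inner_commute[of "df x t"] nor_part_normal[OF x])
  then have "sff f x X Y \<in> span {fN f x, \<i> *s fN f x}"
    unfolding normal_space_complex_line[OF x u card] orthogonal_def tangent_space_def by blast
  then show ?thesis
    unfolding sff_perp_def by (simp add: orth_proj_unique[OF subspace_span])
qed

end

theorem mainTheorem10:
  fixes f :: "complex^'n \<Rightarrow> complex^'m" and U :: "(complex^'n) set"
  assumes "open U"
    and "cx_holomorphic f U"
    and "cx_immersion f U"
    and "\<forall>Y. (\<lambda>y. frechet_derivative f (at y) Y) differentiable_on U"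
  defines "W \<equiv> {x \<in> U. fN f x \<noteq> 0}"
  shows "(cx_antiholomorphic (FN f) W \<longleftrightarrow>
           (\<forall>x\<in>W. \<forall>X Y. frechet_derivative f (at x) Y = fT f x \<longrightarrow> sff_perp f x X Y = 0))
         \<and> (CARD('m) = CARD('n) + 1 \<longrightarrow> cx_antiholomorphic (FN f) W)"
proof -
  interpret holomorphic_immersion f U
    using assms(1-4) by unfold_locales
  text \<open>Both sides reduce to the vanishing of \<open>\<alpha>\<^sup>\<perp>(\<cdot>, \<xi>)\<close> on \<open>W\<close>, since \<open>\<xi>\<close> is the only
    solution of \<open>f\<^sub>* Y = f\<^sup>T\<close>.\<close>
  have anti: "cx_antiholomorphic (FN f) W \<longleftrightarrow> (\<forall>x\<in>W. \<forall>X. sff_perp f x X (fT_coord x) = 0)"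
    unfolding cx_antiholomorphic_def W_def using antiholomorphic_at_iff by auto
  have sff: "(\<forall>x\<in>W. \<forall>X Y. frechet_derivative f (at x) Y = fT f x \<longrightarrow> sff_perp f x X Y = 0)
      \<longleftrightarrow> (\<forall>x\<in>W. \<forall>X. sff_perp f x X (fT_coord x) = 0)"
    unfolding W_def using df_eq_fT_iff by auto
  have "CARD('m) = CARD('n) + 1 \<longrightarrow> (\<forall>x\<in>W. \<forall>X. sff_perp f x X (fT_coord x) = 0)"
    unfolding W_def using sff_perp_codim_one by auto
  with anti sff show ?thesis by blast
qed

end
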